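(* Assume $p$ is subcritical ($\mu<1$) and unbounded. Then $$\lim_{r\to\infty}\frac{\bar F(r)}{\bar H(r)}=\lim_{r\to\infty}\frac{p_r}{q_r}=1-\mu,$$ where the second limit is taken along the infinite set $\{r:p_r>0\}$ (on which $q_r>0$).
   Context: Let $p=(p_0,p_1,p_2,\dots)$ be a probability distribution on the nonnegative integers with mean $\mu=\sum_k kp_k\in(0,\infty)$, and let $\tau(p)$ be a Galton–Watson tree with offspring distribution $p$: it starts with a single root at generation $0$, and every vertex independently has $k$ children with probability $p_k$. The out-degree of a vertex is its number of children. $M$ denotes the global maximal out-degree, i.e. the supremum of the out-degrees of all vertices of $\tau(p)$. $\bar F(r)=\sum_{k>r}p_k$, $H(r)=\mathbf{P}[M\le r]$, $\bar H(r)=1-H(r)$, and $q_r=\mathbf{P}[M=r]$. The distribution $p$ is called unbounded if the set $\{r:p_r>0\}$ is unbounded. *)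

theory Defs
  imports "HOL-Probability.Probability"
begin

text \<open>Galton--Watson tree via the Ulam--Harris construction: an i.i.d. family of
  offspring numbers indexed by all words (nat list), each with law p.
  The vertices of the tree are the words u = [u_0,...,u_{n-1}] with
  u_j < omega (take j u) for all j < n; the out-degree of vertex u is omega u.\<close>

definition GW_space :: "nat pmf \<Rightarrow> (nat list \<Rightarrow> nat) measure" where
  "GW_space p = PiM UNIV (\<lambda>_. measure_pmf p)"

definition gw_vertex :: "(nat list \<Rightarrow> nat) \<Rightarrow> nat list \<Rightarrow> bool" where
  "gw_vertex \<omega> u \<longleftrightarrow> (\<forall>j < length u. u ! j < \<omega> (take j u))"

definition gw_maxdeg :: "(nat list \<Rightarrow> nat) \<Rightarrow> enat" where
  "gw_maxdeg \<omega> = (SUP u \<in> {u. gw_vertex \<omega> u}. enat (\<omega> u))"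

definition mean_pmf :: "nat pmf \<Rightarrow> real" where
  "mean_pmf p = (\<Sum>k. real k * pmf p k)"

definition Fbar :: "nat pmf \<Rightarrow> nat \<Rightarrow> real" where
  "Fbar p r = (\<Sum>k. if k > r then pmf p k else 0)"

definition H :: "nat pmf \<Rightarrow> nat \<Rightarrow> real" where
  "H p r = measure (GW_space p) {\<omega> \<in> space (GW_space p). gw_maxdeg \<omega> \<le> enat r}"

definition Hbar :: "nat pmf \<Rightarrow> nat \<Rightarrow> real" where
  "Hbar p r = 1 - H p r"

definition q :: "nat pmf \<Rightarrow> nat \<Rightarrow> real" where
  "q p r = measure (GW_space p) {\<omega> \<in> space (GW_space p). gw_maxdeg \<omega> = enat r}"

end

theory Submission
  imports Defs "HOL-Probability.Probability"
begin

text \<open>Write \<open>h\<^sub>r = P[M \<le> r]\<close>. The tree has \<open>M \<le> r\<close> iff the root has some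
  \<open>k \<le> r\<close> children and each of the \<open>k\<close> independent subtrees again has \<open>M \<le> r\<close>, so
  \<open>h\<^sub>r = f\<^sub>r(h\<^sub>r)\<close> for the truncated generating function
  \<open>f\<^sub>r(s) = \<Sum>k\<le>r. p\<^sub>k s\<^sup>k\<close>. Since \<open>f\<^sub>r(1) = 1 - Fbar(r)\<close>, this gives
  \<open>Fbar(r) = (1 - h\<^sub>r)(1 - S\<^sub>r)\<close> with \<open>S\<^sub>r\<close> the slope of \<open>f\<^sub>r\<close> between
  \<open>h\<^sub>r\<close> and \<open>1\<close>; as \<open>\<mu> < 1\<close> the second factor stays positive, hence
  \<open>h\<^sub>r \<rightarrow> 1\<close> and \<open>S\<^sub>r \<rightarrow> \<mu>\<close>. Comparing the equations for \<open>r\<close> and \<open>r + 1\<close>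
  likewise gives \<open>p\<^sub>r\<^sub>+\<^sub>1 h\<^sub>r\<^sub>+\<^sub>1\<^sup>r\<^sup>+\<^sup>1 = q\<^sub>r\<^sub>+\<^sub>1 (1 - S\<^sub>r')\<close>, and
  \<open>h\<^sub>r\<^sup>r \<rightarrow> 1\<close> because \<open>r Fbar(r) \<rightarrow> 0\<close> when the mean is finite.\<close>

section \<open>Tails and moments of the offspring law\<close>

lemma pmf_sums_1: "(\<lambda>k. pmf p k) sums 1"
  using measure_pmf.finite_measure_UNION[of "\<lambda>k. {k}" p]
  by (simp add: disjoint_family_on_def measure_pmf_single)

lemma Fbar_sums: "(\<lambda>k. if k > r then pmf p k else 0) sums (1 - (\<Sum>k\<le>r. pmf p k))"
proof -
  have "(\<lambda>k. pmf p k - (if k \<in> {..r} then pmf p k else 0)) sums (1 - (\<Sum>k\<le>r. pmf p k))"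
    by (intro sums_diff pmf_sums_1 sums_If_finite_set) auto
  moreover have "(\<lambda>k. pmf p k - (if k \<in> {..r} then pmf p k else 0)) = (\<lambda>k. if k > r then pmf p k else 0)"
    by (auto simp: fun_eq_iff)
  ultimately show ?thesis by simp
qed

lemma Fbar_eq: "Fbar p r = 1 - (\<Sum>k\<le>r. pmf p k)"
  unfolding Fbar_def using Fbar_sums by (rule sums_unique[symmetric])

lemma Fbar_nonneg: "0 \<le> Fbar p r"
  unfolding Fbar_def by (rule suminf_nonneg[OF sums_summable[OF Fbar_sums]]) simp

lemma Fbar_tendsto_0: "Fbar p \<longlonglongrightarrow> 0"
proof -
  have "(\<lambda>r. 1 - (\<Sum>k\<le>r. pmf p k)) \<longlonglongrightarrow> 1 - 1"
    using pmf_sums_1[of p] by (intro tendsto_intros) (simp add: sums_def_le)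
  then show ?thesis by (simp add: Fbar_eq[abs_def])
qed

lemma Fbar_pos:
  assumes "infinite {r. pmf p r > 0}"
  shows "Fbar p r > 0"
proof -
  obtain k where k: "k > r" "pmf p k > 0"
    using assms by (metis infinite_nat_iff_unbounded mem_Collect_eq)
  have "pmf p k \<le> Fbar p r"
    unfolding Fbar_def
    using sum_le_suminf[OF sums_summable[OF Fbar_sums[of r p]], of "{k}"] k by auto
  then show ?thesis using k by simp
qed

lemma mean_pmf_sums: "summable (\<lambda>k. real k * pmf p k) \<Longrightarrow> (\<lambda>k. real k * pmf p k) sums mean_pmf p"
  unfolding mean_pmf_def by (simp add: summable_sums)

lemma partial_mean_le_mean_pmf:
  "summable (\<lambda>k. real k * pmf p k) \<Longrightarrow> (\<Sum>k\<le>r. real k * pmf p k) \<le> mean_pmf p"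
  unfolding mean_pmf_def by (rule sum_le_suminf) auto

lemma pmf_0_pos_if_mean_less_1:
  assumes "summable (\<lambda>k. real k * pmf p k)" and "mean_pmf p < 1"
  shows "pmf p 0 > 0"
proof -
  have "1 - pmf p 0 \<le> mean_pmf p"
  proof (rule sums_le[OF _ Fbar_sums[of 0 p, simplified] mean_pmf_sums[OF assms(1)]])
    show "(if 0 < k then pmf p k else 0) \<le> real k * pmf p k" for k
      by (cases k) (simp_all add: distrib_right)
  qed
  then show ?thesis using assms(2) by simp
qed

text \<open>\<open>r \<cdot> Fbar p r\<close> is bounded by the tail \<open>\<Sum>k>r. k \<cdot> pmf p k\<close> of the mean.\<close>
lemma mult_Fbar_tendsto_0:
  assumes summ: "summable (\<lambda>k. real k * pmf p k)"
  shows "(\<lambda>r. real r * Fbar p r) \<longlonglongrightarrow> 0"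
proof (rule tendsto_sandwich[of "\<lambda>_. 0" _ _ "\<lambda>r. mean_pmf p - (\<Sum>k\<le>r. real k * pmf p k)"])
  have "(\<lambda>r. mean_pmf p - (\<Sum>k\<le>r. real k * pmf p k)) \<longlonglongrightarrow> mean_pmf p - mean_pmf p"
    using mean_pmf_sums[OF summ] by (intro tendsto_intros) (simp add: sums_def_le)
  then show "(\<lambda>r. mean_pmf p - (\<Sum>k\<le>r. real k * pmf p k)) \<longlonglongrightarrow> 0"
    by simp
  have "real r * Fbar p r \<le> mean_pmf p - (\<Sum>k\<le>r. real k * pmf p k)" for r
  proof (rule sums_le)
    show "(\<lambda>k. real r * (if k > r then pmf p k else 0)) sums (real r * Fbar p r)"
      using sums_mult[OF Fbar_sums] by (simp add: Fbar_eq)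
    show "(\<lambda>k. real k * pmf p k - (if k \<in> {..r} then real k * pmf p k else 0))
        sums (mean_pmf p - (\<Sum>k\<le>r. real k * pmf p k))"
      by (intro sums_diff mean_pmf_sums summ sums_If_finite_set) auto
  qed (auto intro: mult_right_mono)
  then show "\<forall>\<^sub>F r in sequentially. real r * Fbar p r \<le> mean_pmf p - (\<Sum>k\<le>r. real k * pmf p k)"
    by simp
qed (simp_all add: Fbar_nonneg)

section \<open>Truncated generating functions\<close>

text \<open>Dominated convergence: \<open>a\<^sub>r(k) \<rightarrow> k\<close> for each \<open>k\<close>, dominated by \<open>k\<close>.\<close>
lemma truncated_moment_tendsto:
  fixes w x :: "nat \<Rightarrow> real" and a :: "nat \<Rightarrow> nat \<Rightarrow> real"
  assumes w_nonneg: "\<And>k. 0 \<le> w k" and moment: "(\<lambda>k. real k * w k) sums \<mu>"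
    and x_tendsto: "x \<longlonglongrightarrow> 1" and x_nonneg: "\<And>r. 0 \<le> x r"
    and a_lower: "\<And>r k. real k * x r ^ (k - 1) \<le> a r k" and a_upper: "\<And>r k. a r k \<le> real k"
  shows "(\<lambda>r. \<Sum>k\<le>r. w k * a r k) \<longlonglongrightarrow> \<mu>"
proof (rule order_tendstoI)
  fix y assume "y < \<mu>"
  then obtain K where K: "y < (\<Sum>k\<le>K. real k * w k)"
    using order_tendstoD(1)[OF moment[unfolded sums_def_le]] by (auto simp: eventually_sequentially)
  have "(\<lambda>r. \<Sum>k\<le>K. w k * (real k * x r ^ (k - 1))) \<longlonglongrightarrow> (\<Sum>k\<le>K. w k * (real k * 1 ^ (k - 1)))"
    by (intro tendsto_intros x_tendsto)
  then have "\<forall>\<^sub>F r in sequentially. y < (\<Sum>k\<le>K. w k * (real k * x r ^ (k - 1)))"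
    using K by (intro order_tendstoD(1)) (simp_all add: mult.commute)
  then show "\<forall>\<^sub>F r in sequentially. y < (\<Sum>k\<le>r. w k * a r k)"
    using eventually_ge_at_top[of K]
  proof eventually_elim
    case (elim r)
    have "(\<Sum>k\<le>K. w k * (real k * x r ^ (k - 1))) \<le> (\<Sum>k\<le>K. w k * a r k)"
      by (intro sum_mono mult_left_mono a_lower w_nonneg)
    also have "\<dots> \<le> (\<Sum>k\<le>r. w k * a r k)"
      using elim(2) a_lower[of k r for k] x_nonneg[of r]
      by (intro sum_mono2) (auto intro!: mult_nonneg_nonneg w_nonneg order_trans[OF _ a_lower])
    finally show ?case using elim(1) by simp
  qed
next
  fix y assume "\<mu> < y"
  have "(\<Sum>k\<le>r. w k * a r k) \<le> \<mu>" for r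
  proof -
    have "(\<Sum>k\<le>r. w k * a r k) \<le> (\<Sum>k\<le>r. real k * w k)"
      by (intro sum_mono) (metis a_upper w_nonneg mult.commute mult_left_mono)
    also have "\<dots> \<le> \<mu>"
      using sum_le_suminf[OF sums_summable[OF moment], of "{..r}"] sums_unique[OF moment] w_nonneg
      by auto
    finally show ?thesis .
  qed
  then show "\<forall>\<^sub>F r in sequentially. (\<Sum>k\<le>r. w k * a r k) < y"
    using \<open>\<mu> < y\<close> by (intro always_eventually) (auto intro: le_less_trans)
qed

definition trunc_pgf :: "nat pmf \<Rightarrow> nat \<Rightarrow> real \<Rightarrow> real" where
  "trunc_pgf p r s = (\<Sum>k\<le>r. pmf p k * s ^ k)"

text \<open>The difference quotient of \<open>trunc_pgf\<close>, written without division.\<close>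
definition pgf_slope :: "nat pmf \<Rightarrow> nat \<Rightarrow> real \<Rightarrow> real \<Rightarrow> real" where
  "pgf_slope p r x y = (\<Sum>k\<le>r. pmf p k * (\<Sum>i<k. y ^ (k - Suc i) * x ^ i))"

lemma trunc_pgf_diff: "trunc_pgf p r x - trunc_pgf p r y = (x - y) * pgf_slope p r x y"
proof -
  have "pmf p k * x ^ k - pmf p k * y ^ k = (x - y) * (pmf p k * (\<Sum>i<k. y ^ (k - Suc i) * x ^ i))" for k
    by (metis power_diff_sumr2 right_diff_distrib mult.left_commute)
  then show ?thesis
    by (simp add: trunc_pgf_def pgf_slope_def sum_subtractf[symmetric] sum_distrib_left)
qed

lemma trunc_pgf_1: "trunc_pgf p r 1 = 1 - Fbar p r"
  by (simp add: trunc_pgf_def Fbar_eq)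

lemma trunc_pgf_Suc: "trunc_pgf p (Suc r) s = trunc_pgf p r s + pmf p (Suc r) * s ^ Suc r"
  by (simp add: trunc_pgf_def)

lemma power_slope_bounds:
  fixes x y :: real
  assumes "0 \<le> y" "y \<le> x" "x \<le> 1"
  shows "real k * y ^ (k - 1) \<le> (\<Sum>i<k. y ^ (k - Suc i) * x ^ i)"
    and "(\<Sum>i<k. y ^ (k - Suc i) * x ^ i) \<le> real k"
proof -
  have "y ^ (k - 1) \<le> y ^ (k - Suc i) * x ^ i" if "i < k" for i
  proof -
    have "y ^ (k - 1) = y ^ (k - Suc i) * y ^ i"
      using that by (simp add: power_add[symmetric])
    also have "\<dots> \<le> y ^ (k - Suc i) * x ^ i"
      using assms by (intro mult_left_mono power_mono) auto
    finally show ?thesis .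
  qed
  then show "real k * y ^ (k - 1) \<le> (\<Sum>i<k. y ^ (k - Suc i) * x ^ i)"
    using sum_bounded_below[of "{..<k}" "y ^ (k - 1)"] by simp
  have "y ^ (k - Suc i) * x ^ i \<le> 1" for i
    using assms by (intro mult_le_one power_le_one) auto
  then show "(\<Sum>i<k. y ^ (k - Suc i) * x ^ i) \<le> real k"
    using sum_bounded_above[of "{..<k}" "\<lambda>i. y ^ (k - Suc i) * x ^ i" 1] by auto
qed

lemma pgf_slope_le_mean_pmf:
  assumes "summable (\<lambda>k. real k * pmf p k)" "0 \<le> y" "y \<le> x" "x \<le> 1"
  shows "pgf_slope p r x y \<le> mean_pmf p"
proof -
  have "pgf_slope p r x y \<le> (\<Sum>k\<le>r. real k * pmf p k)"
    unfolding pgf_slope_def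
    by (intro sum_mono) (metis power_slope_bounds(2)[OF assms(2-4)] mult.commute mult_left_mono pmf_nonneg)
  also have "\<dots> \<le> mean_pmf p"
    by (rule partial_mean_le_mean_pmf[OF assms(1)])
  finally show ?thesis .
qed

lemma pgf_slope_tendsto_mean_pmf:
  assumes "summable (\<lambda>k. real k * pmf p k)" and "y \<longlonglongrightarrow> 1"
    and "\<And>r. 0 \<le> y r" "\<And>r. y r \<le> x r" "\<And>r. x r \<le> 1"
  shows "(\<lambda>r. pgf_slope p r (x r) (y r)) \<longlonglongrightarrow> mean_pmf p"
  unfolding pgf_slope_def
  using assms power_slope_bounds[OF assms(3-5)]
  by (intro truncated_moment_tendsto[OF _ mean_pmf_sums]) auto

section \<open>The Galton--Watson space\<close>

lemma space_GW_space [simp]: "space (GW_space p) = UNIV"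
  by (simp add: GW_space_def space_PiM)

lemma prob_space_GW_space: "prob_space (GW_space p)"
  unfolding GW_space_def by (intro prob_space_PiM measure_pmf.prob_space_axioms)

lemma measurable_PiM_pmf_component:
  "i \<in> I \<Longrightarrow> (\<lambda>\<omega>. \<omega> i) \<in> measurable (PiM I (\<lambda>_. measure_pmf p)) (count_space UNIV)"
  using measurable_component_singleton[of i I "\<lambda>_. measure_pmf p"]
  by (simp add: measurable_cong_sets[OF refl sets_measure_pmf_count_space])

lemma measurable_GW_coordinate [measurable]:
  "(\<lambda>\<omega>. \<omega> u) \<in> measurable (GW_space p) (count_space UNIV)"
  unfolding GW_space_def by (simp add: measurable_PiM_pmf_component)

lemma gw_maxdeg_le_iff: "gw_maxdeg \<omega> \<le> enat r \<longleftrightarrow> (\<forall>u. gw_vertex \<omega> u \<longrightarrow> \<omega> u \<le> r)"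
  unfolding gw_maxdeg_def by (auto simp: SUP_le_iff)

lemma pred_gw_maxdeg_le [measurable]: "Measurable.pred (GW_space p) (\<lambda>\<omega>. gw_maxdeg \<omega> \<le> enat r)"
  unfolding gw_maxdeg_le_iff gw_vertex_def by measurable

lemma sets_gw_maxdeg_le [measurable]: "{\<omega>. gw_maxdeg \<omega> \<le> enat r} \<in> sets (GW_space p)"
  using pred_gw_maxdeg_le by (simp add: pred_def)

definition gw_subtree :: "nat \<Rightarrow> (nat list \<Rightarrow> nat) \<Rightarrow> nat list \<Rightarrow> nat" where
  "gw_subtree i \<omega> = (\<lambda>s. \<omega> (i # s))"

lemma measurable_gw_subtree [measurable]: "gw_subtree i \<in> measurable (GW_space p) (GW_space p)"
  unfolding gw_subtree_def GW_space_def
  by (rule measurable_PiM_single') (auto intro: measurable_PiM_pmf_component simp: space_PiM)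

lemma gw_vertex_Cons: "gw_vertex \<omega> (i # s) \<longleftrightarrow> i < \<omega> [] \<and> gw_vertex (gw_subtree i \<omega>) s"
  unfolding gw_vertex_def gw_subtree_def by (simp add: All_less_Suc2)

lemma gw_maxdeg_le_iff_subtrees:
  "gw_maxdeg \<omega> \<le> enat r \<longleftrightarrow> \<omega> [] \<le> r \<and> (\<forall>i < \<omega> []. gw_maxdeg (gw_subtree i \<omega>) \<le> enat r)"
proof -
  have "(\<forall>u. gw_vertex \<omega> u \<longrightarrow> \<omega> u \<le> r) \<longleftrightarrow>
        \<omega> [] \<le> r \<and> (\<forall>i s. gw_vertex \<omega> (i # s) \<longrightarrow> \<omega> (i # s) \<le> r)"
    by (metis gw_vertex_def length_0_conv less_nat_zero_code list.exhaust)
  then show ?thesis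
    unfolding gw_maxdeg_le_iff gw_vertex_Cons by (auto simp: gw_subtree_def)
qed

lemma distr_gw_subtree: "distr (GW_space p) (GW_space p) (gw_subtree i) = GW_space p"
  using distr_PiM_reindex[of UNIV "\<lambda>_. measure_pmf p" "Cons i" UNIV]
  by (simp add: GW_space_def gw_subtree_def[abs_def] restrict_UNIV measure_pmf.prob_space_axioms)

lemma indep_vars_GW_coordinates:
  "prob_space.indep_vars (GW_space p) (\<lambda>_. measure_pmf p) (\<lambda>u \<omega>. \<omega> u) UNIV"
proof -
  interpret prob_space "GW_space p" by (rule prob_space_GW_space)
  have "distr (GW_space p) (measure_pmf p) (\<lambda>\<omega>. \<omega> u) = measure_pmf p" for u
    unfolding GW_space_def
    by (rule distr_PiM_component) (auto simp: measure_pmf.prob_space_axioms)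
  then show ?thesis
    by (subst indep_vars_iff_distr_eq_PiM) (auto simp: restrict_UNIV GW_space_def[symmetric])
qed

lemma prob_root_degree_and_subtrees:
  assumes A: "A \<in> sets (GW_space p)"
  shows "measure (GW_space p) {\<omega>. \<omega> [] = k \<and> (\<forall>i<k. gw_subtree i \<omega> \<in> A)}
           = pmf p k * measure (GW_space p) A ^ k"
proof -
  interpret prob_space "GW_space p" by (rule prob_space_GW_space)
  \<comment> \<open>The root and the subtrees are indexed by disjoint blocks of words.\<close>
  define block :: "nat option \<Rightarrow> nat list set"
    where "block j = (case j of None \<Rightarrow> {[]} | Some i \<Rightarrow> range (Cons i))" for j
  define X where "X j \<omega> = restrict \<omega> (block j)" for j and \<omega> :: "nat list \<Rightarrow> nat"
  define M where "M j = PiM (block j) (\<lambda>_. measure_pmf p)" for j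
  define B where "B j = (case j of
       None \<Rightarrow> (\<lambda>f. f []) -` {k} \<inter> space (M j)
     | Some i \<Rightarrow> (\<lambda>f s. f (i # s)) -` A \<inter> space (M j))" for j
  have indep: "indep_vars M X UNIV"
    unfolding X_def M_def
    by (rule indep_vars_restrict[OF indep_vars_GW_coordinates])
       (auto simp: disjoint_family_on_def block_def split: option.splits)
  have root: "(\<lambda>f. f []) \<in> measurable (M None) (measure_pmf p)"
    unfolding M_def by (rule measurable_component_singleton) (simp add: block_def)
  have subtree: "(\<lambda>f s. f (i # s)) \<in> measurable (M (Some i)) (GW_space p)" for i
    unfolding M_def GW_space_def
    by (rule measurable_PiM_single') (auto intro: measurable_PiM_pmf_component simp: space_PiM block_def)
  have B_sets: "B j \<in> sets (M j)" for j
    by (cases j) (simp_all add: B_def measurable_sets[OF root] measurable_sets[OF subtree A])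
  have "X j \<omega> \<in> space (M j)" for j \<omega>
    by (simp add: X_def M_def space_PiM)
  then have X_space: "X j -` (S \<inter> space (M j)) = X j -` S" for j S
    by blast
  have X_None: "X None -` B None = {\<omega>. \<omega> [] = k}"
  proof -
    have "X None -` B None = X None -` ((\<lambda>f. f []) -` {k})"
      unfolding B_def option.case by (rule X_space)
    also have "\<dots> = {\<omega>. \<omega> [] = k}"
      by (auto simp: X_def block_def)
    finally show ?thesis .
  qed
  have X_Some: "X (Some i) -` B (Some i) = gw_subtree i -` A" for i
  proof -
    have "(\<lambda>s. X (Some i) \<omega> (i # s)) = gw_subtree i \<omega>" for \<omega>
      by (simp add: X_def block_def gw_subtree_def)
    then show ?thesis unfolding B_def option.case X_space by auto
  qed
  have root_prob: "prob {\<omega>. \<omega> [] = k} = pmf p k"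
  proof -
    have "distr (GW_space p) (measure_pmf p) (\<lambda>\<omega>. \<omega> []) = measure_pmf p"
      unfolding GW_space_def
      by (rule distr_PiM_component) (auto simp: measure_pmf.prob_space_axioms)
    then show ?thesis
      using measure_distr[of "\<lambda>\<omega>. \<omega> []" "GW_space p" "measure_pmf p" "{k}"]
      by (simp add: measure_pmf_single vimage_def)
  qed
  have subtree_prob: "prob (gw_subtree i -` A) = prob A" for i
    using measure_distr[OF measurable_gw_subtree A] A by (simp add: distr_gw_subtree)
  have "{\<omega>. \<omega> [] = k \<and> (\<forall>i<k. gw_subtree i \<omega> \<in> A)} = (\<Inter>j\<in>insert None (Some ` {..<k}). X j -` B j)"
    using X_None X_Some by auto
  then have "prob {\<omega>. \<omega> [] = k \<and> (\<forall>i<k. gw_subtree i \<omega> \<in> A)}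
      = (\<Prod>j\<in>insert None (Some ` {..<k}). prob (X j -` B j))"
    using indep_varsD[OF indep, of "insert None (Some ` {..<k})" B] B_sets by simp
  also have "\<dots> = prob {\<omega>. \<omega> [] = k} * (\<Prod>i<k. prob (gw_subtree i -` A))"
    by (simp add: prod.reindex X_None X_Some)
  finally show ?thesis by (simp add: root_prob subtree_prob)
qed

lemma H_eq: "H p r = measure (GW_space p) {\<omega>. gw_maxdeg \<omega> \<le> enat r}"
  by (simp add: H_def)

lemma H_fixpoint: "H p r = trunc_pgf p r (H p r)"
proof -
  interpret prob_space "GW_space p" by (rule prob_space_GW_space)
  define A where "A = {\<omega>. gw_maxdeg \<omega> \<le> enat r}"
  define F where "F k = {\<omega>. \<omega> [] = k \<and> (\<forall>i<k. gw_subtree i \<omega> \<in> A)}" for k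
  have A_sets: "A \<in> sets (GW_space p)"
    by (simp add: A_def)
  have F_sets: "F k \<in> sets (GW_space p)" for k
  proof -
    have "Measurable.pred (GW_space p) (\<lambda>\<omega>. \<omega> [] = k \<and> (\<forall>i<k. gw_maxdeg (gw_subtree i \<omega>) \<le> enat r))"
      by measurable
    then show ?thesis by (simp add: F_def A_def pred_def)
  qed
  have "A = (\<Union>k\<le>r. F k)"
  proof (rule set_eqI)
    fix \<omega>
    show "\<omega> \<in> A \<longleftrightarrow> \<omega> \<in> (\<Union>k\<le>r. F k)"
      using gw_maxdeg_le_iff_subtrees[of \<omega> r] by (simp add: A_def F_def)
  qed
  moreover have "disjoint_family_on F {..r}"
    by (auto simp: disjoint_family_on_def F_def)
  ultimately have "prob A = (\<Sum>k\<le>r. prob (F k))"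
    using F_sets by (simp add: measure_finite_Union image_subset_iff)
  then show ?thesis
    by (simp add: H_eq trunc_pgf_def A_def[symmetric] F_def prob_root_degree_and_subtrees[OF A_sets])
qed

lemma gw_maxdeg_le_mono: "{\<omega>. gw_maxdeg \<omega> \<le> enat r} \<subseteq> {\<omega>. gw_maxdeg \<omega> \<le> enat (Suc r)}"
  using order_trans[of _ "enat r" "enat (Suc r)"] by auto

lemma H_mono: "H p r \<le> H p (Suc r)"
proof -
  interpret prob_space "GW_space p" by (rule prob_space_GW_space)
  show ?thesis
    unfolding H_eq by (rule finite_measure_mono[OF gw_maxdeg_le_mono]) simp
qed

lemma H_nonneg: "0 \<le> H p r"
  by (simp add: H_def)

lemma H_le_1: "H p r \<le> 1"
  unfolding H_def by (rule prob_space.prob_le_1[OF prob_space_GW_space])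

lemma q_0: "q p 0 = H p 0"
  by (simp add: q_def H_def zero_enat_def[symmetric])

lemma q_Suc: "q p (Suc r) = H p (Suc r) - H p r"
proof -
  interpret prob_space "GW_space p" by (rule prob_space_GW_space)
  have "{\<omega>. gw_maxdeg \<omega> = enat (Suc r)}
      = {\<omega>. gw_maxdeg \<omega> \<le> enat (Suc r)} - {\<omega>. gw_maxdeg \<omega> \<le> enat r}"
  proof -
    have "e = enat (Suc r) \<longleftrightarrow> e \<le> enat (Suc r) \<and> \<not> e \<le> enat r" for e :: enat
      by (cases e) auto
    then show ?thesis by auto
  qed
  then have "q p (Suc r) = prob ({\<omega>. gw_maxdeg \<omega> \<le> enat (Suc r)} - {\<omega>. gw_maxdeg \<omega> \<le> enat r})"
    by (simp add: q_def)
  also have "\<dots> = H p (Suc r) - H p r"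
    unfolding H_eq by (rule finite_measure_Diff) (simp_all add: gw_maxdeg_le_mono)
  finally show ?thesis .
qed

section \<open>The subcritical fixed point sequence\<close>

locale subcritical_fixpoint_sequence =
  fixes p :: "nat pmf" and h :: "nat \<Rightarrow> real"
  assumes summable_mean: "summable (\<lambda>k. real k * pmf p k)"
    and mean_less_1: "mean_pmf p < 1"
    and unbounded: "infinite {r. pmf p r > 0}"
    and h_nonneg: "0 \<le> h r" and h_le_1: "h r \<le> 1"
    and h_fixpoint: "h r = trunc_pgf p r (h r)"
    and h_mono: "h r \<le> h (Suc r)"
begin

lemma Fbar_factor: "Fbar p r = (1 - h r) * (1 - pgf_slope p r 1 (h r))"
  using trunc_pgf_diff[of p r 1 "h r"] trunc_pgf_1[of p r] h_fixpoint[of r]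
  by (simp add: algebra_simps)

lemma h_less_1: "h r < 1"
proof -
  have "h r \<noteq> 1"
    using Fbar_factor[of r] Fbar_pos[OF unbounded, of r] by auto
  then show ?thesis
    using h_le_1[of r] by simp
qed

lemma one_minus_h_le: "1 - h r \<le> Fbar p r / (1 - mean_pmf p)"
proof -
  have "pgf_slope p r 1 (h r) \<le> mean_pmf p"
    by (rule pgf_slope_le_mean_pmf[OF summable_mean]) (auto intro: h_nonneg h_le_1)
  then have "(1 - h r) * (1 - mean_pmf p) \<le> Fbar p r"
    unfolding Fbar_factor using h_le_1[of r] by (intro mult_left_mono) auto
  then show ?thesis
    using mean_less_1 by (simp add: pos_le_divide_eq)
qed

lemma h_tendsto_1: "h \<longlonglongrightarrow> 1"
proof -
  have "(\<lambda>r. Fbar p r / (1 - mean_pmf p)) \<longlonglongrightarrow> 0"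
    using tendsto_divide_zero[OF Fbar_tendsto_0[of p], of "1 - mean_pmf p"] by simp
  then have "(\<lambda>r. 1 - h r) \<longlonglongrightarrow> 0"
  proof (rule tendsto_sandwich[OF _ _ tendsto_const, rotated 2])
    show "\<forall>\<^sub>F r in sequentially. 0 \<le> 1 - h r"
      using h_le_1 by simp
    show "\<forall>\<^sub>F r in sequentially. 1 - h r \<le> Fbar p r / (1 - mean_pmf p)"
      using one_minus_h_le by simp
  qed
  then have "(\<lambda>r. 1 - (1 - h r)) \<longlonglongrightarrow> 1 - 0"
    by (intro tendsto_diff tendsto_const)
  then show ?thesis by simp
qed

lemma Fbar_ratio_tendsto: "(\<lambda>r. Fbar p r / (1 - h r)) \<longlonglongrightarrow> 1 - mean_pmf p"
proof -
  have "(\<lambda>r. 1 - pgf_slope p r 1 (h r)) \<longlonglongrightarrow> 1 - mean_pmf p"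
    by (intro tendsto_diff tendsto_const pgf_slope_tendsto_mean_pmf[OF summable_mean h_tendsto_1])
       (auto intro: h_nonneg h_le_1)
  moreover have "Fbar p r / (1 - h r) = 1 - pgf_slope p r 1 (h r)" for r
    using h_less_1[of r] by (simp add: Fbar_factor)
  ultimately show ?thesis by simp
qed

lemma h_pos: "0 < h r"
proof -
  have "pmf p 0 * h r ^ 0 \<le> trunc_pgf p r (h r)"
    unfolding trunc_pgf_def using h_nonneg by (intro member_le_sum) auto
  then show ?thesis
    using h_fixpoint[of r] pmf_0_pos_if_mean_less_1[OF summable_mean mean_less_1] by simp
qed

lemma increment_eq:
  "(h (Suc m) - h m) * (1 - pgf_slope p m (h (Suc m)) (h m)) = pmf p (Suc m) * h (Suc m) ^ Suc m"
  using trunc_pgf_diff[of p m "h (Suc m)" "h m"] trunc_pgf_Suc[of p m "h (Suc m)"]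
    h_fixpoint[of m] h_fixpoint[of "Suc m"]
  by (simp add: algebra_simps)

lemma one_minus_slope_pos: "0 < 1 - pgf_slope p m (h (Suc m)) (h m)"
proof -
  have "pgf_slope p m (h (Suc m)) (h m) \<le> mean_pmf p"
    by (rule pgf_slope_le_mean_pmf[OF summable_mean]) (auto intro: h_nonneg h_mono h_le_1)
  then show ?thesis using mean_less_1 by linarith
qed

lemma increment_pos:
  assumes "pmf p (Suc m) > 0"
  shows "h (Suc m) - h m > 0"
proof -
  have "0 < (h (Suc m) - h m) * (1 - pgf_slope p m (h (Suc m)) (h m))"
    using assms h_pos[of "Suc m"] by (simp add: increment_eq)
  then show ?thesis
    using one_minus_slope_pos[of m] by (simp add: zero_less_mult_iff)
qed

text \<open>Bernoulli's inequality turns \<open>1 - h r \<le> Fbar p r / (1 - \<mu>)\<close> into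
  \<open>h r ^ r \<ge> 1 - r Fbar p r / (1 - \<mu>)\<close>, and \<open>r Fbar p r \<rightarrow> 0\<close>.\<close>
lemma h_power_tendsto_1: "(\<lambda>r. h r ^ r) \<longlonglongrightarrow> 1"
proof (rule tendsto_sandwich[OF _ _ _ tendsto_const])
  have "(\<lambda>r. 1 - real r * Fbar p r / (1 - mean_pmf p)) \<longlonglongrightarrow> 1 - 0 / (1 - mean_pmf p)"
    by (intro tendsto_intros mult_Fbar_tendsto_0[OF summable_mean]) (use mean_less_1 in simp)
  then show "(\<lambda>r. 1 - real r * Fbar p r / (1 - mean_pmf p)) \<longlonglongrightarrow> 1"
    by simp
  have "1 - real r * Fbar p r / (1 - mean_pmf p) \<le> h r ^ r" for r
  proof -
    have "1 + real r * (h r - 1) \<le> (1 + (h r - 1)) ^ r"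
      using h_nonneg[of r] by (intro Bernoulli_inequality) simp
    moreover have "real r * (1 - h r) \<le> real r * (Fbar p r / (1 - mean_pmf p))"
      by (intro mult_left_mono one_minus_h_le) simp
    ultimately show ?thesis by (simp add: algebra_simps)
  qed
  then show "\<forall>\<^sub>F r in sequentially. 1 - real r * Fbar p r / (1 - mean_pmf p) \<le> h r ^ r"
    by simp
qed (auto intro!: always_eventually power_le_one h_nonneg h_le_1)

lemma pmf_increment_ratio_eq:
  assumes "pmf p (Suc m) > 0"
  shows "pmf p (Suc m) / (h (Suc m) - h m) = (1 - pgf_slope p m (h (Suc m)) (h m)) / h (Suc m) ^ Suc m"
  using increment_eq[of m] increment_pos[OF assms] h_pos[of "Suc m"]
  by (simp add: divide_simps mult.commute)

lemma increment_ratio_limit: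
  "(\<lambda>m. (1 - pgf_slope p m (h (Suc m)) (h m)) / h (Suc m) ^ Suc m) \<longlonglongrightarrow> (1 - mean_pmf p) / 1"
proof (intro tendsto_divide tendsto_diff tendsto_const)
  show "(\<lambda>m. pgf_slope p m (h (Suc m)) (h m)) \<longlonglongrightarrow> mean_pmf p"
    by (rule pgf_slope_tendsto_mean_pmf[OF summable_mean h_tendsto_1 h_nonneg h_mono h_le_1])
  show "(\<lambda>m. h (Suc m) ^ Suc m) \<longlonglongrightarrow> 1"
    using LIMSEQ_Suc[OF h_power_tendsto_1] by simp
qed simp

lemma pmf_increment_ratio_tendsto:
  "((\<lambda>r. pmf p r / (h r - h (r - 1))) \<longlongrightarrow> 1 - mean_pmf p) (inf at_top (principal {r. pmf p r > 0}))"
proof -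
  define g where "g m = (1 - pgf_slope p m (h (Suc m)) (h m)) / h (Suc m) ^ Suc m" for m
  have "(\<lambda>r. g (r - 1)) \<longlonglongrightarrow> 1 - mean_pmf p"
    using filterlim_compose[OF increment_ratio_limit filterlim_minus_const_nat_at_top, of 1]
    by (simp add: g_def)
  then have "((\<lambda>r. g (r - 1)) \<longlongrightarrow> 1 - mean_pmf p) (inf at_top (principal {r. pmf p r > 0}))"
    using tendsto_mono[OF inf_le1] by blast
  moreover have "\<forall>\<^sub>F r in inf at_top (principal {r. pmf p r > 0}). g (r - 1) = pmf p r / (h r - h (r - 1))"
    unfolding eventually_inf_principal using eventually_ge_at_top[of 1]
  proof eventually_elim
    case (elim r)
    then obtain m where "r = Suc m" by (cases r) auto
    then show ?case by (simp add: g_def pmf_increment_ratio_eq)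
  qed
  ultimately show ?thesis
    by (rule tendsto_cong[THEN iffD1, rotated])
qed

end

theorem proposition2p6:
  fixes p :: "nat pmf"
  assumes summ: "summable (\<lambda>k. real k * pmf p k)"
    and pos: "0 < mean_pmf p"
    and subcrit: "mean_pmf p < 1"
    and unbounded: "infinite {r. pmf p r > 0}"
  shows "((\<lambda>r. Fbar p r / Hbar p r) \<longlongrightarrow> 1 - mean_pmf p) at_top \<and>
         (\<forall>r. pmf p r > 0 \<longrightarrow> q p r > 0) \<and>
         ((\<lambda>r. pmf p r / q p r) \<longlongrightarrow> 1 - mean_pmf p)
           (inf at_top (principal {r. pmf p r > 0}))"
proof -
  interpret subcritical_fixpoint_sequence p "H p"
    by unfold_locales (rule summ subcrit unbounded H_nonneg H_le_1 H_fixpoint H_mono)+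
  have "(\<lambda>r. Fbar p r / Hbar p r) \<longlonglongrightarrow> 1 - mean_pmf p"
    using Fbar_ratio_tendsto by (simp add: Hbar_def)
  moreover have "q p r > 0" if "pmf p r > 0" for r
    using that h_pos increment_pos by (cases r) (simp_all add: q_0 q_Suc)
  moreover have "\<forall>\<^sub>F r in inf at_top (principal {r. pmf p r > 0}).
      pmf p r / (H p r - H p (r - 1)) = pmf p r / q p r"
    unfolding eventually_inf_principal using eventually_ge_at_top[of 1]
  proof eventually_elim
    case (elim r)
    then obtain m where "r = Suc m" by (cases r) auto
    then show ?case by (simp add: q_Suc)
  qed
  then have "((\<lambda>r. pmf p r / q p r) \<longlongrightarrow> 1 - mean_pmf p) (inf at_top (principal {r. pmf p r > 0}))"
    by (rule tendsto_cong[THEN iffD1, OF _ pmf_increment_ratio_tendsto])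
  ultimately show ?thesis by blast
qed

end
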